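(* Let $(\mathcal{P},+)$ be a reparametrization category, let $D_1,D_2$ be $\mathcal{P}$-spaces and $L\in\mathrm{Obj}(\mathcal{P})$. Then the mapping sending $(x,y)\in D_1(\ell_1)\times D_2(\ell_2)$ to the equivalence class of $(\mathrm{id}_L,x,y)$ yields a surjective continuous map \[\bigsqcup_{\substack{(\ell_1,\ell_2)\\ \ell_1+\ell_2=L}}D_1(\ell_1)\times D_2(\ell_2)\longrightarrow (D_1\otimes D_2)(L).\]
   Context: All enriched categories are enriched over the cartesian closed category $\mathbf{Top}$ of ($\Delta$-generated) topological spaces. A reparametrization category is a small enriched semimonoidal category $(\mathcal{P},\otimes)$ (hom-sets are spaces, composition and $\mathcal{P}(a,b)\times\mathcal{P}(c,d)\to\mathcal{P}(a\otimes c,b\otimes d)$ continuous) such that: (1) the semimonoidal structure is strict; (2) all spaces $\mathcal{P}(\ell,\ell')$ are contractible; (3) for every map $\phi:\ell\to\ell'$ and all objects $\ell'_1,\ell'_2$ with $\ell'_1\otimes\ell'_2=\ell'$, there exist maps $\phi_1:\ell_1\to\ell'_1$, $\phi_2:\ell_2\to\ell'_2$ with $\phi=\phi_1\otimes\phi_2$. One writes $\ell+\ell':=\ell\otimes\ell'$ on objects. A $\mathcal{P}$-space is an enriched functor $D:\mathcal{P}^{op}\to\mathbf{Top}$; for $\phi:\ell\to\ell'$ and $x\in D(\ell')$ write $x.\phi=D(\phi)(x)$. The tensor product of $\mathcal{P}$-spaces is $D_1\otimes D_2=\int^{(\ell_1,\ell_2)}\mathcal{P}(-,\ell_1+\ell_2)\times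 D_1(\ell_1)\times D_2(\ell_2)$; thus $(D_1\otimes D_2)(L)$ is a quotient of $\bigsqcup_{(\ell_1,\ell_2)}\mathcal{P}(L,\ell_1+\ell_2)\times D_1(\ell_1)\times D_2(\ell_2)$, its elements being equivalence classes of triples $(\psi,x,y)$. *)

theory Defs
  imports "HOL-Analysis.Analysis" "HOL-Homology.Simplices"
begin

definition simplex_top :: "nat \<Rightarrow> (nat \<Rightarrow> real) topology" where
  "simplex_top p = subtopology (powertop_real UNIV) (standard_simplex p)"

definition deltafy :: "'a topology \<Rightarrow> 'a topology" where
  "deltafy X = topology (\<lambda>U. U \<subseteq> topspace X \<and>
     (\<forall>p \<sigma>. continuous_map (simplex_top p) X \<sigma> \<longrightarrow>
        openin (simplex_top p) {t \<in> topspace (simplex_top p). \<sigma> t \<in> U}))"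

definition delta_generated :: "'a topology \<Rightarrow> bool" where
  "delta_generated X \<longleftrightarrow> deltafy X = X"

text \<open>Binary product in the category of Delta-generated spaces.\<close>
definition dprod :: "'a topology \<Rightarrow> 'b topology \<Rightarrow> ('a \<times> 'b) topology" where
  "dprod X Y = deltafy (prod_topology X Y)"

definition gen_equiv :: "'a set \<Rightarrow> ('a \<times> 'a) set \<Rightarrow> ('a \<times> 'a) set" where
  "gen_equiv S R = (R \<union> R\<inverse>)\<^sup>* \<inter> (S \<times> S)"

definition quotient_top :: "'a topology \<Rightarrow> ('a \<times> 'a) set \<Rightarrow> 'a set topology" where
  "quotient_top X r = topology (\<lambda>U. U \<subseteq> topspace X // r \<and> openin X (\<Union>U))"

text \<open>Morphisms live in type 'm, with domain src and codomain tgt;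
  T a b is the topology of the hom-space P(a,b) whose carrier is exactly
  the set of morphisms a -> b.  cmp g f is g composed after f.
  pl is the tensor on objects (written +), tens the tensor on morphisms.\<close>

definition hom :: "('m \<Rightarrow> 'o) \<Rightarrow> ('m \<Rightarrow> 'o) \<Rightarrow> 'o \<Rightarrow> 'o \<Rightarrow> 'm set" where
  "hom src tgt a b = {f. src f = a \<and> tgt f = b}"

definition reparam_cat ::
  "('m \<Rightarrow> 'o) \<Rightarrow> ('m \<Rightarrow> 'o) \<Rightarrow> ('o \<Rightarrow> 'o \<Rightarrow> 'm topology) \<Rightarrow> ('o \<Rightarrow> 'm) \<Rightarrow>
   ('m \<Rightarrow> 'm \<Rightarrow> 'm) \<Rightarrow> ('o \<Rightarrow> 'o \<Rightarrow> 'o) \<Rightarrow> ('m \<Rightarrow> 'm \<Rightarrow> 'm) \<Rightarrow> bool" where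
  "reparam_cat src tgt T idm cmp pl tens \<longleftrightarrow>
    \<comment> \<open>enriched category\<close>
    (\<forall>a b. topspace (T a b) = hom src tgt a b \<and> delta_generated (T a b)) \<and>
    (\<forall>a. idm a \<in> hom src tgt a a) \<and>
    (\<forall>a b c f g. f \<in> hom src tgt a b \<and> g \<in> hom src tgt b c \<longrightarrow> cmp g f \<in> hom src tgt a c) \<and>
    (\<forall>a b f. f \<in> hom src tgt a b \<longrightarrow> cmp f (idm a) = f \<and> cmp (idm b) f = f) \<and>
    (\<forall>a b c d f g h. f \<in> hom src tgt a b \<and> g \<in> hom src tgt b c \<and> h \<in> hom src tgt c d \<longrightarrow>
        cmp h (cmp g f) = cmp (cmp h g) f) \<and>
    (\<forall>a b c. continuous_map (dprod (T b c) (T a b)) (T a c) (\<lambda>(g, f). cmp g f)) \<and>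
    \<comment> \<open>strict enriched semimonoidal structure\<close>
    (\<forall>a b c d f g. f \<in> hom src tgt a b \<and> g \<in> hom src tgt c d \<longrightarrow>
        tens f g \<in> hom src tgt (pl a c) (pl b d)) \<and>
    (\<forall>a c. tens (idm a) (idm c) = idm (pl a c)) \<and>
    (\<forall>a b c a' b' c' f g f' g'. f \<in> hom src tgt a b \<and> g \<in> hom src tgt b c \<and>
        f' \<in> hom src tgt a' b' \<and> g' \<in> hom src tgt b' c' \<longrightarrow>
        tens (cmp g f) (cmp g' f') = cmp (tens g g') (tens f f')) \<and>
    (\<forall>a b c d. continuous_map (dprod (T a b) (T c d)) (T (pl a c) (pl b d)) (\<lambda>(f, g). tens f g)) \<and>
    (\<forall>a b c. pl (pl a b) c = pl a (pl b c)) \<and>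
    (\<forall>f g h. tens (tens f g) h = tens f (tens g h)) \<and>
    \<comment> \<open>(2) contractible hom-spaces\<close>
    (\<forall>a b. topspace (T a b) \<noteq> {} \<and> contractible_space (T a b)) \<and>
    \<comment> \<open>(3) factorization\<close>
    (\<forall>l l' \<phi> l1' l2'. \<phi> \<in> hom src tgt l l' \<and> pl l1' l2' = l' \<longrightarrow>
        (\<exists>l1 l2 \<phi>1 \<phi>2. \<phi>1 \<in> hom src tgt l1 l1' \<and> \<phi>2 \<in> hom src tgt l2 l2' \<and> \<phi> = tens \<phi>1 \<phi>2))"

text \<open>A P-space: X l is the space D(l); act phi x is x.phi.\<close>
definition P_space ::
  "('m \<Rightarrow> 'o) \<Rightarrow> ('m \<Rightarrow> 'o) \<Rightarrow> ('o \<Rightarrow> 'o \<Rightarrow> 'm topology) \<Rightarrow> ('o \<Rightarrow> 'm) \<Rightarrow>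
   ('m \<Rightarrow> 'm \<Rightarrow> 'm) \<Rightarrow> ('o \<Rightarrow> 'x topology) \<Rightarrow> ('m \<Rightarrow> 'x \<Rightarrow> 'x) \<Rightarrow> bool" where
  "P_space src tgt T idm cmp X act \<longleftrightarrow>
    (\<forall>l. delta_generated (X l)) \<and>
    (\<forall>l l'. continuous_map (dprod (X l') (T l l')) (X l) (\<lambda>(x, \<phi>). act \<phi> x)) \<and>
    (\<forall>l x. x \<in> topspace (X l) \<longrightarrow> act (idm l) x = x) \<and>
    (\<forall>l l' l'' \<phi> \<psi> x. \<psi> \<in> hom src tgt l l' \<and> \<phi> \<in> hom src tgt l' l'' \<and> x \<in> topspace (X l'') \<longrightarrow>
        act \<psi> (act \<phi> x) = act (cmp \<phi> \<psi>) x)"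

definition tensor_pre ::
  "('o \<Rightarrow> 'o \<Rightarrow> 'm topology) \<Rightarrow> ('o \<Rightarrow> 'o \<Rightarrow> 'o) \<Rightarrow> ('o \<Rightarrow> 'x topology) \<Rightarrow> ('o \<Rightarrow> 'y topology) \<Rightarrow>
   'o \<Rightarrow> (('o \<times> 'o) \<times> ('m \<times> ('x \<times> 'y))) topology" where
  "tensor_pre T pl X1 X2 L =
     sum_topology (\<lambda>(l1, l2). dprod (T L (pl l1 l2)) (dprod (X1 l1) (X2 l2))) UNIV"

text \<open>Generating relation of the coend: (psi, x.alpha, y.beta) ~ ((alpha (x) beta) o psi, x, y).\<close>
definition tensor_rel ::
  "('m \<Rightarrow> 'o) \<Rightarrow> ('m \<Rightarrow> 'o) \<Rightarrow> ('m \<Rightarrow> 'm \<Rightarrow> 'm) \<Rightarrow> ('o \<Rightarrow> 'o \<Rightarrow> 'o) \<Rightarrow> ('m \<Rightarrow> 'm \<Rightarrow> 'm) \<Rightarrow>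
   ('o \<Rightarrow> 'x topology) \<Rightarrow> ('m \<Rightarrow> 'x \<Rightarrow> 'x) \<Rightarrow> ('o \<Rightarrow> 'y topology) \<Rightarrow> ('m \<Rightarrow> 'y \<Rightarrow> 'y) \<Rightarrow>
   'o \<Rightarrow> ((('o \<times> 'o) \<times> ('m \<times> ('x \<times> 'y))) \<times> (('o \<times> 'o) \<times> ('m \<times> ('x \<times> 'y)))) set" where
  "tensor_rel src tgt cmp pl tens X1 act1 X2 act2 L =
     {(((l1, l2), (\<psi>, (act1 \<alpha> x, act2 \<beta> y))), ((k1, k2), (cmp (tens \<alpha> \<beta>) \<psi>, (x, y)))) |
        l1 l2 k1 k2 \<alpha> \<beta> \<psi> x y.
        \<alpha> \<in> hom src tgt l1 k1 \<and> \<beta> \<in> hom src tgt l2 k2 \<and> \<psi> \<in> hom src tgt L (pl l1 l2) \<and>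
        x \<in> topspace (X1 k1) \<and> y \<in> topspace (X2 k2)}"

definition tensor_equiv where
  "tensor_equiv src tgt T cmp pl tens X1 act1 X2 act2 L =
     gen_equiv (topspace (tensor_pre T pl X1 X2 L)) (tensor_rel src tgt cmp pl tens X1 act1 X2 act2 L)"

definition tensor_space where
  "tensor_space src tgt T cmp pl tens X1 act1 X2 act2 L =
     quotient_top (tensor_pre T pl X1 X2 L) (tensor_equiv src tgt T cmp pl tens X1 act1 X2 act2 L)"

end

theory Submission
  imports Defs
begin

text \<open>The map is the inclusion \<open>(x, y) \<mapsto> (id\<^sub>L, x, y)\<close> into the disjoint union presenting
  the coend, followed by the quotient map; the inclusion is continuous because pairing with the
  point \<open>id\<^sub>L\<close> is. For surjectivity, the factorization axiom splits any \<open>\<psi> : L \<rightarrow> l\<^sub>1 + l\<^sub>2\<close>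
  as \<open>\<psi>\<^sub>1 \<otimes> \<psi>\<^sub>2\<close> with \<open>\<psi>\<^sub>i : m\<^sub>i \<rightarrow> l\<^sub>i\<close> and \<open>m\<^sub>1 + m\<^sub>2 = L\<close>, and the coend relation identifies
  \<open>(\<psi>, x, y) = ((\<psi>\<^sub>1 \<otimes> \<psi>\<^sub>2) \<circ> id\<^sub>L, x, y)\<close> with \<open>(id\<^sub>L, x.\<psi>\<^sub>1, y.\<psi>\<^sub>2)\<close>.\<close>

lemma openin_deltafy:
  "openin (deltafy X) U \<longleftrightarrow> U \<subseteq> topspace X \<and>
     (\<forall>p \<sigma>. continuous_map (simplex_top p) X \<sigma> \<longrightarrow>
        openin (simplex_top p) {t \<in> topspace (simplex_top p). \<sigma> t \<in> U})"
proof -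
  have "istopology (\<lambda>U. U \<subseteq> topspace X \<and>
     (\<forall>p \<sigma>. continuous_map (simplex_top p) X \<sigma> \<longrightarrow>
        openin (simplex_top p) {t \<in> topspace (simplex_top p). \<sigma> t \<in> U}))"
    unfolding istopology_def
  proof (rule conjI; intro allI impI)
    fix S T assume S: "S \<subseteq> topspace X \<and> (\<forall>p \<sigma>. continuous_map (simplex_top p) X \<sigma> \<longrightarrow>
        openin (simplex_top p) {t \<in> topspace (simplex_top p). \<sigma> t \<in> S})"
      and T: "T \<subseteq> topspace X \<and> (\<forall>p \<sigma>. continuous_map (simplex_top p) X \<sigma> \<longrightarrow>
        openin (simplex_top p) {t \<in> topspace (simplex_top p). \<sigma> t \<in> T})"
    have "{t \<in> topspace (simplex_top p). \<sigma> t \<in> S \<inter> T} =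
      {t \<in> topspace (simplex_top p). \<sigma> t \<in> S} \<inter> {t \<in> topspace (simplex_top p). \<sigma> t \<in> T}"
      for p \<sigma> by blast
    with S T show "S \<inter> T \<subseteq> topspace X \<and> (\<forall>p \<sigma>. continuous_map (simplex_top p) X \<sigma> \<longrightarrow>
        openin (simplex_top p) {t \<in> topspace (simplex_top p). \<sigma> t \<in> S \<inter> T})"
      by auto
  next
    fix K assume "\<forall>U\<in>K. U \<subseteq> topspace X \<and> (\<forall>p \<sigma>. continuous_map (simplex_top p) X \<sigma> \<longrightarrow>
        openin (simplex_top p) {t \<in> topspace (simplex_top p). \<sigma> t \<in> U})"
    moreover have "{t \<in> topspace (simplex_top p). \<sigma> t \<in> \<Union>K} =
      \<Union>((\<lambda>U. {t \<in> topspace (simplex_top p). \<sigma> t \<in> U}) ` K)" for p \<sigma> by blast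
    ultimately show "\<Union>K \<subseteq> topspace X \<and> (\<forall>p \<sigma>. continuous_map (simplex_top p) X \<sigma> \<longrightarrow>
        openin (simplex_top p) {t \<in> topspace (simplex_top p). \<sigma> t \<in> \<Union>K})"
      by auto
  qed
  then show ?thesis
    unfolding deltafy_def by simp
qed

lemma openin_deltafy_if_openin: "openin X U \<Longrightarrow> openin (deltafy X) U"
  by (auto simp: openin_deltafy openin_subset openin_continuous_map_preimage)

lemma topspace_deltafy [simp]: "topspace (deltafy X) = topspace X"
  by (metis openin_deltafy openin_deltafy_if_openin openin_subset openin_topspace subset_antisym)

lemma continuous_map_simplex_into_deltafy:
  assumes "continuous_map (simplex_top p) X \<sigma>"
  shows "continuous_map (simplex_top p) (deltafy X) \<sigma>"
  using assms by (auto simp: continuous_map openin_deltafy)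

lemma continuous_map_deltafy_into_deltafy:
  assumes g: "continuous_map (deltafy Y) X g"
  shows "continuous_map (deltafy Y) (deltafy X) g"
  unfolding continuous_map
proof (intro conjI allI impI)
  show "g ` topspace (deltafy Y) \<subseteq> topspace (deltafy X)"
    using continuous_map_image_subset_topspace[OF g] by simp
  fix U assume U: "openin (deltafy X) U"
  show "openin (deltafy Y) {y \<in> topspace (deltafy Y). g y \<in> U}"
    unfolding openin_deltafy
  proof (intro conjI allI impI)
    fix p \<sigma> assume "continuous_map (simplex_top p) Y \<sigma>"
    then have \<sigma>: "continuous_map (simplex_top p) (deltafy Y) \<sigma>"
      by (rule continuous_map_simplex_into_deltafy)
    then have "openin (simplex_top p) {t \<in> topspace (simplex_top p). (g \<circ> \<sigma>) t \<in> U}"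
      using U g continuous_map_compose unfolding openin_deltafy by blast
    moreover have "\<sigma> ` topspace (simplex_top p) \<subseteq> topspace Y"
      using continuous_map_image_subset_topspace[OF \<sigma>] by simp
    ultimately show "openin (simplex_top p) {t \<in> topspace (simplex_top p). \<sigma> t \<in> {y \<in> topspace (deltafy Y). g y \<in> U}}"
      by (simp add: image_subset_iff cong: conj_cong)
  qed auto
qed

lemma continuous_map_dprod_pair_const:
  assumes "c \<in> topspace C"
  shows "continuous_map (dprod A B) (dprod C (dprod A B)) (\<lambda>w. (c, w))"
proof -
  have "continuous_map (dprod A B) (prod_topology C (dprod A B)) (\<lambda>w. (c, w))"
    using assms by (auto intro: continuous_map_pairedI)
  then show ?thesis
    unfolding dprod_def by (rule continuous_map_deltafy_into_deltafy)
qed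

lemma equiv_gen_equiv: "equiv S (gen_equiv S R)"
  unfolding gen_equiv_def equiv_def refl_on_def sym_def trans_def
  by (auto intro: rtrancl_trans dest: sym_rtrancl[OF sym_Un_converse, unfolded sym_def, rule_format])

lemma gen_equiv_if_rel: "(a, b) \<in> R \<Longrightarrow> a \<in> S \<Longrightarrow> b \<in> S \<Longrightarrow> (a, b) \<in> gen_equiv S R"
  unfolding gen_equiv_def by (simp add: r_into_rtrancl)

lemma openin_quotient_top:
  assumes r: "equiv (topspace X) r"
  shows "openin (quotient_top X r) U \<longleftrightarrow> U \<subseteq> topspace X // r \<and> openin X (\<Union>U)"
proof -
  have "istopology (\<lambda>U. U \<subseteq> topspace X // r \<and> openin X (\<Union>U))"
    unfolding istopology_def
  proof (rule conjI; intro allI impI)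
    fix S T assume S: "S \<subseteq> topspace X // r \<and> openin X (\<Union>S)"
      and T: "T \<subseteq> topspace X // r \<and> openin X (\<Union>T)"
    then have "\<Union>(S \<inter> T) = \<Union>S \<inter> \<Union>T"
      using quotient_disj[OF r] by blast
    with S T show "S \<inter> T \<subseteq> topspace X // r \<and> openin X (\<Union>(S \<inter> T))"
      by auto
  next
    fix K assume "\<forall>U\<in>K. U \<subseteq> topspace X // r \<and> openin X (\<Union>U)"
    moreover have "\<Union>(\<Union>K) = \<Union>(Union ` K)" by blast
    ultimately show "\<Union>K \<subseteq> topspace X // r \<and> openin X (\<Union>(\<Union>K))"
      by auto
  qed
  then show ?thesis
    unfolding quotient_top_def by simp
qed

lemma topspace_quotient_top:
  assumes "equiv (topspace X) r"
  shows "topspace (quotient_top X r) = topspace X // r"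
  by (metis Union_quotient[OF assms] assms openin_quotient_top openin_subset openin_topspace
      subset_antisym subset_refl)

lemma continuous_map_quotient_top_class:
  assumes r: "equiv (topspace X) r"
  shows "continuous_map X (quotient_top X r) (\<lambda>p. r``{p})"
  unfolding continuous_map
proof (intro conjI allI impI)
  show "(\<lambda>p. r``{p}) ` topspace X \<subseteq> topspace (quotient_top X r)"
    unfolding topspace_quotient_top[OF r] by (auto intro: quotientI)
  fix U assume "openin (quotient_top X r) U"
  then have U: "U \<subseteq> topspace X // r" "openin X (\<Union>U)"
    unfolding openin_quotient_top[OF r] by auto
  have "{p \<in> topspace X. r``{p} \<in> U} = \<Union>U"
  proof
    show "{p \<in> topspace X. r``{p} \<in> U} \<subseteq> \<Union>U"
      using r by (auto simp: equiv_def refl_on_def)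
    show "\<Union>U \<subseteq> {p \<in> topspace X. r``{p} \<in> U}"
    proof
      fix p assume "p \<in> \<Union>U"
      then obtain a where "r``{a} \<in> U" "a \<in> topspace X" "p \<in> r``{a}"
        using U(1) by (auto elim: quotientE)
      then show "p \<in> {p \<in> topspace X. r``{p} \<in> U}"
        using equiv_class_eq_iff[OF r, of a p] by simp
    qed
  qed
  then show "openin X {p \<in> topspace X. r``{p} \<in> U}"
    using U(2) by simp
qed

lemma continuous_map_from_sum_topology:
  assumes "\<And>i. i \<in> I \<Longrightarrow> continuous_map (X i) Y (\<lambda>x. g (i, x))"
  shows "continuous_map (sum_topology X I) Y g"
  unfolding continuous_map
proof (intro conjI allI impI)
  show "g ` topspace (sum_topology X I) \<subseteq> topspace Y"
    using assms by (force dest: continuous_map_image_subset_topspace)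
  fix U assume U: "openin Y U"
  show "openin (sum_topology X I) {z \<in> topspace (sum_topology X I). g z \<in> U}"
    unfolding openin_sum_topology
  proof (intro conjI ballI)
    fix i assume i: "i \<in> I"
    then have "{x. (i, x) \<in> {z \<in> topspace (sum_topology X I). g z \<in> U}} =
      {x \<in> topspace (X i). g (i, x) \<in> U}"
      by auto
    then show "openin (X i) {x. (i, x) \<in> {z \<in> topspace (sum_topology X I). g z \<in> U}}"
      using openin_continuous_map_preimage[OF assms[OF i] U] by simp
  qed auto
qed

lemma reparam_cat_topspace:
  "reparam_cat src tgt T idm cmp pl tens \<Longrightarrow> topspace (T a b) = hom src tgt a b"
  by (simp add: reparam_cat_def)

lemma reparam_cat_idm_hom:
  "reparam_cat src tgt T idm cmp pl tens \<Longrightarrow> idm a \<in> hom src tgt a a"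
  by (simp add: reparam_cat_def)

lemma reparam_cat_cmp_idm:
  "reparam_cat src tgt T idm cmp pl tens \<Longrightarrow> f \<in> hom src tgt a b \<Longrightarrow> cmp f (idm a) = f"
  by (simp add: reparam_cat_def)

lemma reparam_cat_tens_hom:
  "reparam_cat src tgt T idm cmp pl tens \<Longrightarrow> f \<in> hom src tgt a b \<Longrightarrow> g \<in> hom src tgt c d \<Longrightarrow>
    tens f g \<in> hom src tgt (pl a c) (pl b d)"
  by (simp add: reparam_cat_def)

lemma reparam_cat_factorization:
  assumes P: "reparam_cat src tgt T idm cmp pl tens" and \<phi>: "\<phi> \<in> hom src tgt l (pl l1' l2')"
  obtains l1 l2 \<phi>1 \<phi>2 where "pl l1 l2 = l" "\<phi>1 \<in> hom src tgt l1 l1'" "\<phi>2 \<in> hom src tgt l2 l2'"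
    "\<phi> = tens \<phi>1 \<phi>2"
proof -
  have "\<forall>l l' \<phi> l1' l2'. \<phi> \<in> hom src tgt l l' \<and> pl l1' l2' = l' \<longrightarrow>
      (\<exists>l1 l2 \<phi>1 \<phi>2. \<phi>1 \<in> hom src tgt l1 l1' \<and> \<phi>2 \<in> hom src tgt l2 l2' \<and> \<phi> = tens \<phi>1 \<phi>2)"
    using P by (simp add: reparam_cat_def)
  then obtain l1 l2 \<phi>1 \<phi>2 where \<phi>i: "\<phi>1 \<in> hom src tgt l1 l1'" "\<phi>2 \<in> hom src tgt l2 l2'"
    and \<phi>_eq: "\<phi> = tens \<phi>1 \<phi>2"
    using \<phi> by blast
  have "pl l1 l2 = l"
    using reparam_cat_tens_hom[OF P \<phi>i] \<phi> \<phi>_eq by (simp add: hom_def)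
  then show thesis
    using \<phi>i \<phi>_eq by (rule that)
qed

lemma P_space_act_in_topspace:
  assumes "reparam_cat src tgt T idm cmp pl tens" "P_space src tgt T idm cmp X act"
    and "\<phi> \<in> hom src tgt l l'" "x \<in> topspace (X l')"
  shows "act \<phi> x \<in> topspace (X l)"
proof -
  have "continuous_map (dprod (X l') (T l l')) (X l) (\<lambda>(x, \<phi>). act \<phi> x)"
    using assms(2) unfolding P_space_def by blast
  moreover have "(x, \<phi>) \<in> topspace (dprod (X l') (T l l'))"
    using assms(3,4) reparam_cat_topspace[OF assms(1)] unfolding dprod_def by simp
  ultimately show ?thesis
    using continuous_map_image_subset_topspace by fastforce
qed

lemma topspace_tensor_pre:
  assumes "reparam_cat src tgt T idm cmp pl tens"
  shows "topspace (tensor_pre T pl X1 X2 L) =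
    (SIGMA (l1, l2):UNIV. hom src tgt L (pl l1 l2) \<times> topspace (X1 l1) \<times> topspace (X2 l2))"
  using reparam_cat_topspace[OF assms] unfolding tensor_pre_def dprod_def by auto

lemma continuous_map_tensor_pre_idm:
  assumes P: "reparam_cat src tgt T idm cmp pl tens"
  shows "continuous_map (sum_topology (\<lambda>(l1, l2). dprod (X1 l1) (X2 l2)) {(l1, l2). pl l1 l2 = L})
    (tensor_pre T pl X1 X2 L) (\<lambda>(l, w). (l, (idm L, w)))"
proof (rule continuous_map_from_sum_topology)
  fix l assume "l \<in> {(l1, l2). pl l1 l2 = L}"
  then obtain l1 l2 where l: "l = (l1, l2)" "pl l1 l2 = L" by blast
  have "continuous_map (dprod (X1 l1) (X2 l2)) (dprod (T L (pl l1 l2)) (dprod (X1 l1) (X2 l2)))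
      (\<lambda>w. (idm L, w))"
    using reparam_cat_idm_hom[OF P] reparam_cat_topspace[OF P] l(2)
    by (intro continuous_map_dprod_pair_const) simp
  moreover have "continuous_map (dprod (T L (pl l1 l2)) (dprod (X1 l1) (X2 l2)))
      (tensor_pre T pl X1 X2 L) (\<lambda>w. ((l1, l2), w))"
    unfolding tensor_pre_def
    using continuous_map_component_injection[of "(l1, l2)" UNIV
        "\<lambda>(l1, l2). dprod (T L (pl l1 l2)) (dprod (X1 l1) (X2 l2))"]
    by simp
  ultimately have "continuous_map (dprod (X1 l1) (X2 l2)) (tensor_pre T pl X1 X2 L)
      ((\<lambda>w. ((l1, l2), w)) \<circ> (\<lambda>w. (idm L, w)))"
    by (rule continuous_map_compose)
  then show "continuous_map ((\<lambda>(l1, l2). dprod (X1 l1) (X2 l2)) l) (tensor_pre T pl X1 X2 L)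
      (\<lambda>w. case (l, w) of (l, w) \<Rightarrow> (l, idm L, w))"
    unfolding l(1) by (simp add: o_def)
qed

lemma tensor_relI:
  assumes "\<alpha> \<in> hom src tgt l1 k1" "\<beta> \<in> hom src tgt l2 k2" "\<psi> \<in> hom src tgt L (pl l1 l2)"
    and "x \<in> topspace (X1 k1)" "y \<in> topspace (X2 k2)"
  shows "(((l1, l2), (\<psi>, (act1 \<alpha> x, act2 \<beta> y))), ((k1, k2), (cmp (tens \<alpha> \<beta>) \<psi>, (x, y))))
    \<in> tensor_rel src tgt cmp pl tens X1 act1 X2 act2 L"
  using assms by (auto simp: tensor_rel_def)

lemma tensor_equiv_idm_representative:
  assumes P: "reparam_cat src tgt T idm cmp pl tens"
    and D1: "P_space src tgt T idm cmp X1 act1" and D2: "P_space src tgt T idm cmp X2 act2"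
    and q: "q \<in> topspace (tensor_pre T pl X1 X2 L)"
  obtains l1 l2 x y where "pl l1 l2 = L" "x \<in> topspace (X1 l1)" "y \<in> topspace (X2 l2)"
    "(((l1, l2), (idm L, (x, y))), q) \<in> tensor_equiv src tgt T cmp pl tens X1 act1 X2 act2 L"
proof -
  obtain k1 k2 \<psi> x y where q_eq: "q = ((k1, k2), (\<psi>, (x, y)))" and \<psi>: "\<psi> \<in> hom src tgt L (pl k1 k2)"
    and x: "x \<in> topspace (X1 k1)" and y: "y \<in> topspace (X2 k2)"
    using q unfolding topspace_tensor_pre[OF P] by auto
  obtain l1 l2 \<psi>1 \<psi>2 where l: "pl l1 l2 = L" and \<psi>i: "\<psi>1 \<in> hom src tgt l1 k1" "\<psi>2 \<in> hom src tgt l2 k2"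
    and \<psi>_eq: "\<psi> = tens \<psi>1 \<psi>2"
    using reparam_cat_factorization[OF P \<psi>] by blast
  let ?p = "((l1, l2), (idm L, (act1 \<psi>1 x, act2 \<psi>2 y)))"
  have x': "act1 \<psi>1 x \<in> topspace (X1 l1)" and y': "act2 \<psi>2 y \<in> topspace (X2 l2)"
    using P_space_act_in_topspace[OF P D1 \<psi>i(1) x] P_space_act_in_topspace[OF P D2 \<psi>i(2) y] .
  have idm: "idm L \<in> hom src tgt L (pl l1 l2)"
    using reparam_cat_idm_hom[OF P] l by simp
  have "(?p, ((k1, k2), (cmp (tens \<psi>1 \<psi>2) (idm L), (x, y))))
      \<in> tensor_rel src tgt cmp pl tens X1 act1 X2 act2 L"
    using \<psi>i idm x y by (rule tensor_relI)
  moreover have "cmp (tens \<psi>1 \<psi>2) (idm L) = \<psi>"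
    using reparam_cat_cmp_idm[OF P \<psi>] \<psi>_eq by simp
  ultimately have "(?p, q) \<in> tensor_rel src tgt cmp pl tens X1 act1 X2 act2 L"
    unfolding q_eq by simp
  moreover have "?p \<in> topspace (tensor_pre T pl X1 X2 L)"
    unfolding topspace_tensor_pre[OF P] using x' y' l reparam_cat_idm_hom[OF P, of L] by simp
  ultimately have "(?p, q) \<in> tensor_equiv src tgt T cmp pl tens X1 act1 X2 act2 L"
    using q unfolding tensor_equiv_def by (rule gen_equiv_if_rel)
  with l x' y' show thesis by (rule that)
qed

theorem proposition3p3:
  fixes src tgt :: "'m \<Rightarrow> 'o" and T :: "'o \<Rightarrow> 'o \<Rightarrow> 'm topology" and idm :: "'o \<Rightarrow> 'm"
    and cmp :: "'m \<Rightarrow> 'm \<Rightarrow> 'm" and pl :: "'o \<Rightarrow> 'o \<Rightarrow> 'o" and tens :: "'m \<Rightarrow> 'm \<Rightarrow> 'm"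
    and X1 :: "'o \<Rightarrow> 'x topology" and act1 :: "'m \<Rightarrow> 'x \<Rightarrow> 'x"
    and X2 :: "'o \<Rightarrow> 'y topology" and act2 :: "'m \<Rightarrow> 'y \<Rightarrow> 'y"
    and L :: 'o
  assumes "reparam_cat src tgt T idm cmp pl tens"
    and "P_space src tgt T idm cmp X1 act1"
    and "P_space src tgt T idm cmp X2 act2"
  defines "f \<equiv> (\<lambda>((l1, l2), (x, y)).
      tensor_equiv src tgt T cmp pl tens X1 act1 X2 act2 L `` {((l1, l2), (idm L, (x, y)))})"
    and "S \<equiv> sum_topology (\<lambda>(l1, l2). dprod (X1 l1) (X2 l2)) {(l1, l2). pl l1 l2 = L}"
  shows "continuous_map S (tensor_space src tgt T cmp pl tens X1 act1 X2 act2 L) f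
    \<and> f ` topspace S = topspace (tensor_space src tgt T cmp pl tens X1 act1 X2 act2 L)"
proof -
  let ?P = "tensor_pre T pl X1 X2 L"
  let ?R = "tensor_equiv src tgt T cmp pl tens X1 act1 X2 act2 L"
  let ?Q = "tensor_space src tgt T cmp pl tens X1 act1 X2 act2 L"
  have R: "equiv (topspace ?P) ?R"
    unfolding tensor_equiv_def by (rule equiv_gen_equiv)
  have "continuous_map S ?Q ((\<lambda>p. ?R``{p}) \<circ> (\<lambda>(l, w). (l, (idm L, w))))"
    unfolding S_def tensor_space_def
    using continuous_map_tensor_pre_idm[OF assms(1)] continuous_map_quotient_top_class[OF R]
    by (rule continuous_map_compose)
  moreover have "(\<lambda>p. ?R``{p}) \<circ> (\<lambda>(l, w). (l, (idm L, w))) = f"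
    unfolding f_def by (auto simp: fun_eq_iff)
  ultimately have cont: "continuous_map S ?Q f"
    by simp
  have "topspace ?Q \<subseteq> f ` topspace S"
  proof
    fix C assume "C \<in> topspace ?Q"
    then obtain q where q: "q \<in> topspace ?P" and C: "C = ?R``{q}"
      unfolding tensor_space_def topspace_quotient_top[OF R] by (auto elim: quotientE)
    obtain l1 l2 x y where "pl l1 l2 = L" "x \<in> topspace (X1 l1)" "y \<in> topspace (X2 l2)"
      and "(((l1, l2), (idm L, (x, y))), q) \<in> ?R"
      using tensor_equiv_idm_representative[OF assms(1-3) q] .
    then have "C = f ((l1, l2), (x, y))" and "((l1, l2), (x, y)) \<in> topspace S"
      unfolding C f_def S_def dprod_def using equiv_class_eq[OF R] by auto
    then show "C \<in> f ` topspace S"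
      by blast
  qed
  with cont show ?thesis
    using continuous_map_image_subset_topspace by blast
qed

end
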